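(* Let $r\in\mathbb{R}$. For all integers $n,k \geq 0$, \[ S_{2,r}(n,k) = \sum_{l=0}^k \binom{n}{l} r^l S_2(n-l,k-l). \]
   Context: $S_2(n,k)$ denotes the Stirling numbers of the second kind, given by $\frac{1}{k!}(e^t-1)^k = \sum_{n\ge k} S_2(n,k)\frac{t^n}{n!}$, with $S_2(a,b)=0$ whenever $a<b$ (and $\binom{n}{l}=0$ for $l>n$). For $r\in\mathbb{R}$ and integer $k\ge 0$, the extended Stirling numbers of the second kind $S_{2,r}(n,k)$ are defined by \[ \frac{1}{k!}(e^t-1+rt)^k = \sum_{n=k}^\infty S_{2,r}(n,k)\frac{t^n}{n!}, \] with $S_{2,r}(n,k)=0$ for $n<k$. *)

theory Defs
  imports "HOL-Combinatorics.Stirling" "HOL-Computational_Algebra.Formal_Power_Series"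
begin

definition ext_stirling2 :: "real \<Rightarrow> nat \<Rightarrow> nat \<Rightarrow> real" where
  "ext_stirling2 r n k =
     fact n * fps_nth (fps_const (1 / fact k) * (fps_exp 1 - 1 + fps_const r * fps_X) ^ k) n"

end

theory Submission
  imports Defs
begin

text \<open>Write E = e^t - 1. Since E' = E + 1, the derivative of E^(j+1) is
  (j+1) (E^(j+1) + E^j), which mirrors the recurrence of the Stirling numbers; hence E^j/j!
  is their exponential generating function. Expanding (E + r t)^k/k! binomially gives the
  terms (r t)^l/l! * E^(k-l)/(k-l)!, and multiplying an exponential generating function by
  t^l/l! shifts it by l and introduces the factor (n choose l).\<close>

lemma fps_exp_minus_one_power_nth:
  "fps_nth ((fps_exp (1::'a::field_char_0) - 1) ^ k) n = fact k * of_nat (Stirling n k) / fact n"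
proof (induction n arbitrary: k)
  case 0
  then show ?case by (cases k) (simp_all add: fps_mult_nth)
next
  case (Suc m)
  show ?case
  proof (cases k)
    case 0
    then show ?thesis by simp
  next
    case (Suc j)
    define E :: "'a fps" where "E = fps_exp 1 - 1"
    have "fps_deriv (E ^ Suc j) = of_nat (Suc j) * (E ^ Suc j + E ^ j)"
    proof -
      have "fps_deriv E = E + 1"
        by (simp add: E_def)
      then show ?thesis
        using fps_deriv_power'[of E "Suc j"] by (simp add: algebra_simps)
    qed
    then have "of_nat (Suc m) * fps_nth (E ^ Suc j) (Suc m)
        = of_nat (Suc j) * (fps_nth (E ^ Suc j) m + fps_nth (E ^ j) m)"
      by (metis fps_deriv_nth fps_mult_left_const_nth fps_add_nth fps_of_nat Suc_eq_plus1)
    also have "\<dots> = of_nat (Suc j) * (fact (Suc j) * of_nat (Stirling m (Suc j)) / fact m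
        + fact j * of_nat (Stirling m j) / fact m)"
      by (simp only: Suc.IH[folded E_def])
    also have "\<dots> = fact (Suc j) * of_nat (Stirling (Suc m) (Suc j)) / fact m"
      by (simp add: field_simps)
    finally show ?thesis
      unfolding E_def \<open>k = Suc j\<close> fact_Suc[of m] by (simp add: field_simps del: of_nat_Suc)
  qed
qed

lemma Stirling_egf:
  "fps_const (1 / fact k) * (fps_exp (1::'a::field_char_0) - 1) ^ k
     = Abs_fps (\<lambda>n. of_nat (Stirling n k) / fact n)"
  by (rule fps_ext) (simp add: fps_exp_minus_one_power_nth)

lemma binomial_ring_div_fact_fps:
  fixes a b :: "'a::field_char_0 fps"
  shows "fps_const (1 / fact k) * (a + b) ^ k
     = (\<Sum>l\<le>k. (fps_const (1 / fact l) * b ^ l) * (fps_const (1 / fact (k - l)) * a ^ (k - l)))"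
proof -
  have coeff: "fps_const (1 / fact k) * of_nat (k choose l)
      = fps_const (1 / fact l) * (fps_const (1 / fact (k - l)) :: 'a fps)"
    if "l \<le> k" for l
  proof -
    have "1 / fact k * of_nat (k choose l) = 1 / fact l * (1 / fact (k - l) :: 'a)"
      unfolding binomial_fact[OF that] by (simp add: field_simps)
    then show ?thesis
      by (simp only: fps_of_nat[symmetric] fps_const_mult)
  qed
  have "fps_const (1 / fact k) * (b + a) ^ k
      = (\<Sum>l\<le>k. fps_const (1 / fact k) * of_nat (k choose l) * b ^ l * a ^ (k - l))"
    by (simp add: binomial_ring sum_distrib_left mult.assoc)
  also have "\<dots> = (\<Sum>l\<le>k. (fps_const (1 / fact l) * b ^ l) * (fps_const (1 / fact (k - l)) * a ^ (k - l)))"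
  proof (rule sum.cong[OF refl])
    fix l
    assume "l \<in> {..k}"
    then have "l \<le> k" by simp
    show "fps_const (1 / fact k) * of_nat (k choose l) * b ^ l * a ^ (k - l)
        = (fps_const (1 / fact l) * b ^ l) * (fps_const (1 / fact (k - l)) * a ^ (k - l))"
      unfolding coeff[OF \<open>l \<le> k\<close>] by (simp only: mult_ac)
  qed
  finally show ?thesis
    by (simp add: add.commute)
qed

lemma egf_X_power_mult_nth:
  fixes a :: "nat \<Rightarrow> 'a::field_char_0"
  shows "fact n * fps_nth (fps_const (c / fact l) * fps_X ^ l * Abs_fps (\<lambda>m. a m / fact m)) n
     = c * of_nat (n choose l) * a (n - l)"
  by (cases "l \<le> n") (simp_all add: fps_X_power_mult_nth mult.assoc binomial_fact field_simps)

theorem theorem2: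
  fixes r :: real and n k :: nat
  shows "ext_stirling2 r n k =
    (\<Sum>l = 0..k. real (n choose l) * r ^ l * real (Stirling (n - l) (k - l)))"
proof -
  define S where "S j = Abs_fps (\<lambda>m. real (Stirling m j) / fact m)" for j
  have "fps_const (1 / fact k) * (fps_exp 1 - 1 + fps_const r * fps_X) ^ k
      = (\<Sum>l\<le>k. fps_const (r ^ l / fact l) * fps_X ^ l * S (k - l))"
    by (simp add: binomial_ring_div_fact_fps Stirling_egf S_def power_mult_distrib
        fps_const_power mult_ac)
  then have "ext_stirling2 r n k
      = (\<Sum>l\<le>k. fact n * fps_nth (fps_const (r ^ l / fact l) * fps_X ^ l * S (k - l)) n)"
    by (simp add: ext_stirling2_def fps_sum_nth sum_distrib_left)
  also have "\<dots> = (\<Sum>l\<le>k. real (n choose l) * r ^ l * real (Stirling (n - l) (k - l)))"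
    unfolding S_def egf_X_power_mult_nth by (simp add: mult_ac)
  finally show ?thesis
    by (simp add: atLeast0AtMost)
qed

end
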